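(* Let $X_1,X_2,\dots$ be independent uniform random variables on $(0,1]$ and $\mathcal{U}_m=(X_1,\dots,X_m)$. As $m\to\infty$: $E[D^\alpha(\mathcal{U}_m)]\sim\frac{\Gamma(\alpha+1)}{1-\alpha}m^{1-\alpha}$ for $0<\alpha<1$; $E[D^1(\mathcal{U}_m)]-\log m\to\gamma-2$; $E[D^\alpha(\mathcal{U}_m)]\to\frac1{\alpha(\alpha-1)}$ for $\alpha>1$, where $\gamma$ is Euler's constant.
   Context: For a sequence $(x_1,\dots,x_m)\in(0,1]^m$, the directed linear forest joins each $x_i$ ($i\ge2$) to $\max\{x_j:1\le j<i,\ x_j<x_i\}$ when this set is nonempty (otherwise $x_i$ gets no edge); its total weight with exponent $\alpha>0$ is $D^\alpha(x_1,\dots,x_m)=\sum_{i=2}^m(x_i-\max\{x_j:j<i,x_j<x_i\})^\alpha\mathbf{1}\{\min_{1\le j<i}x_j<x_i\}$. *)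

theory Defs
  imports "HOL-Analysis.Analysis" "HOL-Library.Landau_Symbols"
begin

text \<open>Directed linear forest weight. Sequence x_1..x_m is represented 0-indexed as
  x 0, ..., x (m-1). Index i (1 \<le> i < m) is joined to the largest earlier value
  smaller than x i, if any.\<close>
definition dlf_weight :: "real \<Rightarrow> nat \<Rightarrow> (nat \<Rightarrow> real) \<Rightarrow> real" where
  "dlf_weight \<alpha> m x =
     (\<Sum>i\<in>{1..<m}. if (\<exists>j<i. x j < x i)
        then (x i - Max {x j | j. j < i \<and> x j < x i}) powr \<alpha> else 0)"

definition unif_cube :: "nat \<Rightarrow> (nat \<Rightarrow> real) measure" where
  "unif_cube m = PiM {..<m} (\<lambda>_. uniform_measure lborel {0<..1})"

definition ED :: "real \<Rightarrow> nat \<Rightarrow> real" where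
  "ED \<alpha> m = integral\<^sup>L (unif_cube m) (dlf_weight \<alpha> m)"

end

(*
  D^alpha is a sum of edge weights: x_i is joined to x_j (j < i) exactly when x_j < x_i and no
  earlier x_k lies strictly between them, ties x_k = x_j being resolved in favour of the smaller
  index; this makes the decomposition exact for every sequence, not only almost surely.
  Conditionally on x_i = a and x_j = b, the other i - 1 earlier points independently avoid an
  interval of length a - b, so the edge (i, j) contributes
    int int_{0 < b < a <= 1} (a - b)^alpha (1 - (a - b))^(i - 1) = B(alpha + 1, i + 1)
  and E[D^alpha(U_m)] = sum_{i < m} i B(alpha + 1, i + 1).  For alpha <> 1 the sum telescopes,
    alpha (1 - alpha) i B(alpha + 1, i + 1) = F(i + 1) - F(i),
    F(n) = Gamma(alpha + 1) n! (alpha n + 1) / Gamma(alpha + n + 1),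
  and n! n^alpha / Gamma(alpha + n + 1) -> 1 gives the two power regimes; for alpha = 1 the sum
  equals H_m + 2 / (m + 1) - 2.
*)
theory Submission
  imports Defs "HOL-Probability.Probability" "HOL-Real_Asymp.Real_Asymp"
begin

definition is_parent :: "nat \<Rightarrow> nat \<Rightarrow> (nat \<Rightarrow> real) \<Rightarrow> bool" where
  "is_parent i j x \<longleftrightarrow>
     x j < x i \<and> (\<forall>k\<in>{..<i} - {j}. \<not> (x j < x k \<and> x k < x i) \<and> \<not> (k < j \<and> x k = x j))"

definition edge_weight :: "real \<Rightarrow> nat \<Rightarrow> nat \<Rightarrow> (nat \<Rightarrow> real) \<Rightarrow> real" where
  "edge_weight \<alpha> i j x = (if is_parent i j x then (x i - x j) powr \<alpha> else 0)"

(* The values of x k that still allow j, with x j = b, to be the parent of a point of value a;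
   an index k < j already blocks on a tie. *)
definition nonblocking :: "nat \<Rightarrow> nat \<Rightarrow> real \<Rightarrow> real \<Rightarrow> real set" where
  "nonblocking j k a b = - (if k < j then {b..<a} else {b<..<a})"

lemma is_parent_iff_nonblocking:
  "is_parent i j x \<longleftrightarrow> x j < x i \<and> (\<forall>k\<in>{..<i} - {j}. x k \<in> nonblocking j k (x i) (x j))"
proof -
  have "\<not> (x j < z \<and> z < x i) \<and> \<not> (k < j \<and> z = x j) \<longleftrightarrow> z \<in> nonblocking j k (x i) (x j)"
    if "x j < x i" for k z
    using that by (auto simp: nonblocking_def)
  then show ?thesis
    unfolding is_parent_def by blast
qed

lemma is_parent_iff_Least:
  fixes x :: "nat \<Rightarrow> real" and i j :: nat
  defines "M \<equiv> Max {x j | j. j < i \<and> x j < x i}"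
  assumes "j < i" "\<exists>j<i. x j < x i"
  shows "is_parent i j x \<longleftrightarrow> j = (LEAST j. j < i \<and> x j = M)"
proof -
  have "M \<in> {x j | j. j < i \<and> x j < x i}"
    unfolding M_def using assms(3) by (intro Max_in) auto
  then have ex: "\<exists>j. j < i \<and> x j = M" and "M < x i"
    by auto
  have le_M: "x k \<le> M" if "k < i" "x k < x i" for k
    unfolding M_def using that by (intro Max_ge) auto
  define p where "p = (LEAST j. j < i \<and> x j = M)"
  have p: "p < i" "x p = M"
    using LeastI_ex[OF ex] unfolding p_def by auto
  have p_le: "p \<le> k" if "k < i" "x k = M" for k
    unfolding p_def using that by (intro Least_le) auto
  show ?thesis
    unfolding p_def[symmetric]
  proof
    assume "is_parent i j x"
    then have "x j < x i"
      and unblocked: "\<forall>k\<in>{..<i} - {j}. \<not> (x j < x k \<and> x k < x i) \<and> \<not> (k < j \<and> x k = x j)"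
      unfolding is_parent_def by auto
    have "x j \<le> x p"
      using le_M[OF \<open>j < i\<close> \<open>x j < x i\<close>] p by simp
    show "j = p"
    proof (rule ccontr)
      assume "j \<noteq> p"
      moreover have "x j \<noteq> x p \<or> p < j"
        using p_le[OF \<open>j < i\<close>] p \<open>j \<noteq> p\<close> by force
      ultimately show False
        using unblocked[rule_format, of p] \<open>x j \<le> x p\<close> p \<open>M < x i\<close> by auto
    qed
  next
    assume "j = p"
    have "\<not> (M < x k \<and> x k < x i) \<and> \<not> (k < p \<and> x k = M)" if "k < i" for k
      using le_M[OF that] p_le[OF that] by force
    then show "is_parent i j x"
      unfolding is_parent_def \<open>j = p\<close> p using \<open>M < x i\<close> by auto
  qed
qed

lemma dlf_summand_eq_sum_edge_weight:
  "(if \<exists>j<i. x j < x i then (x i - Max {x j | j. j < i \<and> x j < x i}) powr \<alpha> else 0)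
    = (\<Sum>j<i. edge_weight \<alpha> i j x)"
proof (cases "\<exists>j<i. x j < x i")
  case True
  define M where "M = Max {x j | j. j < i \<and> x j < x i}"
  define p where "p = (LEAST j. j < i \<and> x j = M)"
  have "M \<in> {x j | j. j < i \<and> x j < x i}"
    unfolding M_def using True by (intro Max_in) auto
  then have "\<exists>j. j < i \<and> x j = M"
    by auto
  then have "p < i \<and> x p = M"
    unfolding p_def by (rule LeastI_ex)
  have "edge_weight \<alpha> i j x = (if j = p then (x i - x j) powr \<alpha> else 0)" if "j < i" for j
    using is_parent_iff_Least[OF that True] unfolding edge_weight_def p_def M_def by simp
  then have "(\<Sum>j<i. edge_weight \<alpha> i j x) = (\<Sum>j<i. if j = p then (x i - x j) powr \<alpha> else 0)"
    by (intro sum.cong) auto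
  also have "\<dots> = (x i - M) powr \<alpha>"
    using \<open>p < i \<and> x p = M\<close> by simp
  finally show ?thesis
    using True unfolding M_def by simp
next
  case False
  then have "edge_weight \<alpha> i j x = 0" if "j < i" for j
    using that by (simp add: edge_weight_def is_parent_def)
  then show ?thesis
    unfolding if_not_P[OF False] by (simp add: sum.neutral)
qed

lemma dlf_weight_eq_sum_edge_weight:
  "dlf_weight \<alpha> m x = (\<Sum>i<m. \<Sum>j<i. edge_weight \<alpha> i j x)"
  unfolding dlf_weight_def dlf_summand_eq_sum_edge_weight
  by (rule sum.mono_neutral_left) (auto simp: Suc_le_eq)

lemma measurable_edge_weight:
  assumes "sets N = sets borel" "i \<in> I" "{..<i} \<subseteq> I" "j < i"
  shows "edge_weight \<alpha> i j \<in> borel_measurable (PiM I (\<lambda>_. N))"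
proof -
  have component: "(\<lambda>x. x k) \<in> borel_measurable (PiM I (\<lambda>_. N))" if "k \<in> I" for k
    using measurable_component_singleton[OF that, of "\<lambda>_. N"]
    unfolding measurable_cong_sets[OF refl assms(1)] .
  have compare: "Measurable.pred (PiM I (\<lambda>_. N)) (\<lambda>x. f x < g x)"
    "Measurable.pred (PiM I (\<lambda>_. N)) (\<lambda>x. f x = g x)"
    if "f \<in> borel_measurable (PiM I (\<lambda>_. N))" "g \<in> borel_measurable (PiM I (\<lambda>_. N))"
    for f g :: "(nat \<Rightarrow> real) \<Rightarrow> real"
    unfolding Measurable.pred_def
    by (rule borel_measurable_less[OF that], rule measurable_equality_set[OF that])
  have "Measurable.pred (PiM I (\<lambda>_. N)) (is_parent i j)"
    unfolding is_parent_def
    by (intro pred_intros_logic pred_intros_finite(3) pred_intros_conj1' compare component)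
       (use assms in auto)
  then show ?thesis
    unfolding edge_weight_def
    by (intro measurable_If powr_real_measurable borel_measurable_diff measurable_const component)
       (use assms in \<open>auto simp: Measurable.pred_def\<close>)
qed

definition unif01 :: "real measure" where
  "unif01 = uniform_measure lborel {0<..1}"

lemma sets_unif01 [simp, measurable_cong]: "sets unif01 = sets borel"
  by (simp add: unif01_def)

lemma space_unif01 [simp]: "space unif01 = UNIV"
  by (simp add: unif01_def)

interpretation unif01: prob_space unif01
  unfolding unif01_def by (rule prob_space_uniform_measure) auto

lemma nn_integral_unif01:
  assumes [measurable]: "f \<in> borel_measurable borel"
  shows "(\<integral>\<^sup>+x. f x \<partial>unif01) = (\<integral>\<^sup>+x. f x * indicator {0<..1} x \<partial>lborel)"
  unfolding unif01_def by (subst nn_integral_uniform_measure) (auto simp: divide_ennreal_def)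

lemma AE_unif01: "AE x in unif01. 0 < x \<and> x \<le> 1"
  unfolding unif01_def by (rule AE_uniform_measureI) auto

lemma emeasure_unif01: "A \<in> sets borel \<Longrightarrow> emeasure unif01 A = emeasure lborel ({0<..1} \<inter> A)"
  unfolding unif01_def by (simp add: divide_ennreal_def)

lemma nn_integral_unif01_reflect:
  fixes g :: "real \<Rightarrow> ennreal"
  assumes [measurable]: "g \<in> borel_measurable borel" and "0 < a" "a \<le> 1"
  shows "(\<integral>\<^sup>+b. (if b < a then g (a - b) else 0) \<partial>unif01)
    = (\<integral>\<^sup>+u. (if 0 < u \<and> u < a then g u else 0) \<partial>lborel)"
proof -
  have "(\<integral>\<^sup>+b. (if b < a then g (a - b) else 0) \<partial>unif01)
      = (\<integral>\<^sup>+b. (if b < a then g (a - b) else 0) * indicator {0<..1} b \<partial>lborel)"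
    by (rule nn_integral_unif01) measurable
  also have "\<dots> = ennreal \<bar>-1\<bar> * (\<integral>\<^sup>+u. (if a + -1 * u < a then g (a - (a + -1 * u)) else 0)
      * indicator {0<..1} (a + -1 * u) \<partial>lborel)"
    by (rule nn_integral_real_affine) auto
  also have "\<dots> = (\<integral>\<^sup>+u. (if 0 < u \<and> u < a then g u else 0) \<partial>lborel)"
    using assms(2,3) by (auto intro!: nn_integral_cong simp: indicator_def)
  finally show ?thesis .
qed

lemma nn_integral_lborel_upper_interval:
  fixes c :: ennreal
  shows "(\<integral>\<^sup>+a. (if 0 < u \<and> u < a \<and> a \<le> 1 then c else 0) \<partial>lborel)
    = c * ennreal (1 - u) * indicator {0<..<1} u"
proof (cases "0 < u \<and> u < 1")
  case True
  then have "(\<integral>\<^sup>+a. (if 0 < u \<and> u < a \<and> a \<le> 1 then c else 0) \<partial>lborel)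
      = (\<integral>\<^sup>+a. c * indicator {u<..1} a \<partial>lborel)"
    by (intro nn_integral_cong) (auto simp: indicator_def)
  then show ?thesis
    using True by (simp add: nn_integral_cmult_indicator)
next
  case False
  then have "(\<lambda>a. if 0 < u \<and> u < a \<and> a \<le> 1 then c else 0) = (\<lambda>_. 0)"
    by force
  then show ?thesis
    using False by simp
qed

lemma nn_integral_unif01_diff:
  fixes g :: "real \<Rightarrow> ennreal"
  assumes [measurable]: "g \<in> borel_measurable borel"
  shows "(\<integral>\<^sup>+a. \<integral>\<^sup>+b. (if b < a then g (a - b) else 0) \<partial>unif01 \<partial>unif01)
    = (\<integral>\<^sup>+u. g u * ennreal (1 - u) * indicator {0<..<1} u \<partial>lborel)"
proof -
  define F where "F a = (\<integral>\<^sup>+u. (if 0 < u \<and> u < a \<and> a \<le> 1 then g u else 0) \<partial>lborel)" for a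
  have "F a = 0" if "\<not> (0 < a \<and> a \<le> 1)" for a
  proof -
    have "(\<lambda>u. if 0 < u \<and> u < a \<and> a \<le> 1 then g u else 0) = (\<lambda>_. 0)"
      using that by force
    then show ?thesis
      by (simp add: F_def)
  qed
  then have F_indicator: "F a * indicator {0<..1} a = F a" for a
    by (cases "0 < a \<and> a \<le> 1") auto
  have "(\<integral>\<^sup>+a. \<integral>\<^sup>+b. (if b < a then g (a - b) else 0) \<partial>unif01 \<partial>unif01)
      = (\<integral>\<^sup>+a. F a \<partial>unif01)"
    using AE_unif01 by (rule nn_integral_cong_AE[OF AE_mp]) (auto simp: F_def nn_integral_unif01_reflect)
  also have "\<dots> = (\<integral>\<^sup>+a. F a \<partial>lborel)"
    unfolding F_def by (subst nn_integral_unif01) (measurable, simp add: F_indicator[unfolded F_def])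
  also have "\<dots> = (\<integral>\<^sup>+u. \<integral>\<^sup>+a. (if 0 < u \<and> u < a \<and> a \<le> 1 then g u else 0) \<partial>lborel \<partial>lborel)"
    unfolding F_def
    by (rule lborel_pair.Fubini'[where f = "\<lambda>u a. if 0 < u \<and> u < a \<and> a \<le> 1 then g u else 0"])
       measurable
  finally show ?thesis
    by (simp add: nn_integral_lborel_upper_interval)
qed

lemma nn_integral_powr_mult_power_Beta:
  fixes \<alpha> :: real
  assumes "\<alpha> > 0"
  shows "(\<integral>\<^sup>+u. ennreal (u powr \<alpha> * (1 - u) ^ n) * ennreal (1 - u) * indicator {0<..<1} u \<partial>lborel)
    = ennreal (Beta (\<alpha> + 1) (real n + 2))"
proof -
  have "((\<lambda>u. u powr (\<alpha> + 1 - 1) * (1 - u) powr (real n + 2 - 1)) has_integral Beta (\<alpha> + 1) (real n + 2))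
      {0<..<1}"
    using has_integral_Beta_real[of "\<alpha> + 1" "real n + 2"] assms
    by (simp add: has_integral_Icc_iff_Ioo)
  then have "(\<integral>\<^sup>+u. ennreal (u powr (\<alpha> + 1 - 1) * (1 - u) powr (real n + 2 - 1))
      * indicator {0<..<1} u \<partial>lborel)
      = ennreal (Beta (\<alpha> + 1) (real n + 2))"
    by (rule nn_integral_has_integral_lebesgue'[rotated]) auto
  moreover have "ennreal (u powr (\<alpha> + 1 - 1) * (1 - u) powr (real n + 2 - 1)) * indicator {0<..<1} u
      = ennreal (u powr \<alpha> * (1 - u) ^ n) * ennreal (1 - u) * indicator {0<..<1} u" for u
  proof (cases "0 < u \<and> u < 1")
    case True
    have "(1 - u) powr (real n + 2 - 1) = (1 - u) powr real (Suc n)"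
      by simp
    also have "\<dots> = (1 - u) ^ Suc n"
      using True by (intro powr_realpow) auto
    also have "\<dots> = (1 - u) ^ n * (1 - u)"
      by simp
    finally show ?thesis
      using True by (simp add: indicator_def ennreal_mult[symmetric])
  qed (auto simp: indicator_def)
  ultimately show ?thesis
    by simp
qed

interpretation unif01_product: product_sigma_finite "\<lambda>_ :: nat. unif01"
  by (simp add: product_sigma_finite_def prob_space_imp_sigma_finite unif01.prob_space_axioms)

lemma emeasure_unif01_nonblocking:
  assumes "0 < b" "b < a" "a \<le> 1"
  shows "emeasure unif01 (nonblocking j k a b) = ennreal (1 - (a - b))"
proof -
  define C where "C = (if k < j then {b..<a} else {b<..<a})"
  have "C \<in> sets borel" "{0<..1} \<inter> C = C"
    using assms by (auto simp: C_def)
  then have "emeasure unif01 C = ennreal (a - b)"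
    using assms by (simp add: emeasure_unif01 C_def)
  moreover have "nonblocking j k a b = space unif01 - C"
    by (auto simp: C_def nonblocking_def)
  moreover have "emeasure unif01 (space unif01 - C) = emeasure unif01 (space unif01) - emeasure unif01 C"
    using \<open>C \<in> sets borel\<close> by (intro emeasure_compl) auto
  moreover have "ennreal 1 - ennreal (a - b) = ennreal (1 - (a - b))"
    using assms by (intro ennreal_minus) auto
  ultimately show ?thesis
    using unif01.emeasure_space_1 by simp
qed

lemma edge_weight_merge_eq_prod_indicator:
  fixes p :: "nat \<Rightarrow> real"
  assumes "j < i" "i < m" "p j < p i"
  defines "S \<equiv> {..<m} - {i, j}"
  shows "ennreal (edge_weight \<alpha> i j (merge {i, j} S (p, y)))
    = ennreal ((p i - p j) powr \<alpha>)
      * (\<Prod>k\<in>S. indicator (if k < i then nonblocking j k (p i) (p j) else UNIV) (y k))"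
proof -
  define x where "x = merge {i, j} S (p, y)"
  have x: "x i = p i" "x j = p j" "\<And>k. k \<in> S \<Longrightarrow> x k = y k"
    by (auto simp: x_def merge_def S_def)
  have "{..<i} - {j} = {k\<in>S. k < i}"
    unfolding S_def using assms(1,2) by auto
  then have "is_parent i j x \<longleftrightarrow> (\<forall>k\<in>S. k < i \<longrightarrow> y k \<in> nonblocking j k (p i) (p j))"
    unfolding is_parent_iff_nonblocking using assms(3) x by auto
  moreover have "(\<Prod>k\<in>S. indicator (if k < i then nonblocking j k (p i) (p j) else UNIV) (y k))
      = (if \<forall>k\<in>S. k < i \<longrightarrow> y k \<in> nonblocking j k (p i) (p j) then 1 else (0 :: ennreal))"
    by (auto simp: indicator_def S_def split: if_splits intro!: prod.neutral prod_zero)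
  ultimately show ?thesis
    unfolding x_def[symmetric] edge_weight_def using x by auto
qed

lemma nn_integral_edge_weight_fiber:
  fixes p :: "nat \<Rightarrow> real"
  assumes "j < i" "i < m" "0 < p j" "p i \<le> 1"
  defines "S \<equiv> {..<m} - {i, j}"
  shows "(\<integral>\<^sup>+y. ennreal (edge_weight \<alpha> i j (merge {i, j} S (p, y))) \<partial>PiM S (\<lambda>_. unif01))
    = (if p j < p i then ennreal ((p i - p j) powr \<alpha> * (1 - (p i - p j)) ^ (i - 1)) else 0)"
proof (cases "p j < p i")
  case False
  then show ?thesis
    by (simp add: edge_weight_def is_parent_def merge_def)
next
  case True
  define A where "A k = (if k < i then nonblocking j k (p i) (p j) else UNIV)" for k
  have "(\<lambda>y. \<Prod>k\<in>S. indicator (A k) (y k) :: ennreal) \<in> borel_measurable (PiM S (\<lambda>_. unif01))"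
    by (intro borel_measurable_prod_ennreal
        measurable_comp[OF measurable_component_singleton, unfolded comp_def] borel_measurable_indicator)
       (auto simp: A_def nonblocking_def)
  then have "(\<integral>\<^sup>+y. ennreal (edge_weight \<alpha> i j (merge {i, j} S (p, y))) \<partial>PiM S (\<lambda>_. unif01))
      = ennreal ((p i - p j) powr \<alpha>) * (\<integral>\<^sup>+y. (\<Prod>k\<in>S. indicator (A k) (y k)) \<partial>PiM S (\<lambda>_. unif01))"
    using edge_weight_merge_eq_prod_indicator[OF assms(1,2) True]
    by (simp add: nn_integral_cmult A_def S_def)
  also have "(\<integral>\<^sup>+y. (\<Prod>k\<in>S. indicator (A k) (y k)) \<partial>PiM S (\<lambda>_. unif01))
      = (\<Prod>k\<in>S. emeasure unif01 (A k))"
    by (subst unif01_product.product_nn_integral_prod)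
       (auto simp: S_def A_def nonblocking_def intro!: prod.cong nn_integral_indicator)
  also have "\<dots> = (\<Prod>k\<in>S. if k < i then ennreal (1 - (p i - p j)) else 1)"
    using True assms(3,4) unif01.emeasure_space_1
    by (intro prod.cong refl) (simp add: A_def emeasure_unif01_nonblocking)
  also have "\<dots> = (\<Prod>k\<in>{k\<in>S. k < i}. ennreal (1 - (p i - p j)))"
    by (rule prod.inter_filter[symmetric]) (simp add: S_def)
  also have "{k\<in>S. k < i} = {..<i} - {j}"
    unfolding S_def using assms(1,2) by auto
  also have "(\<Prod>k\<in>{..<i} - {j}. ennreal (1 - (p i - p j))) = ennreal ((1 - (p i - p j)) ^ (i - 1))"
    using True assms(1-4) by (simp add: card_Diff_singleton ennreal_power)
  finally show ?thesis
    using True assms(3,4) by (simp add: ennreal_mult[symmetric])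
qed

lemma nn_integral_edge_weight:
  assumes "j < i" "i < m" "\<alpha> > 0"
  shows "(\<integral>\<^sup>+x. ennreal (edge_weight \<alpha> i j x) \<partial>PiM {..<m} (\<lambda>_. unif01))
    = ennreal (Beta (\<alpha> + 1) (real i + 1))"
proof -
  define S where "S = {..<m} - {i, j}"
  define h where "h a b = (if b < a then ennreal ((a - b) powr \<alpha> * (1 - (a - b)) ^ (i - 1)) else 0)"
    for a b :: real
  have split: "{..<m} = {i, j} \<union> S" "{i, j} \<inter> S = {}"
    using assms(1,2) by (auto simp: S_def)
  have [measurable]: "case_prod h \<in> borel_measurable (unif01 \<Otimes>\<^sub>M unif01)"
    unfolding h_def by measurable
  have "(\<integral>\<^sup>+x. ennreal (edge_weight \<alpha> i j x) \<partial>PiM {..<m} (\<lambda>_. unif01))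
      = (\<integral>\<^sup>+p. \<integral>\<^sup>+y. ennreal (edge_weight \<alpha> i j (merge {i, j} S (p, y))) \<partial>PiM S (\<lambda>_. unif01)
          \<partial>PiM {i, j} (\<lambda>_. unif01))"
    unfolding split(1)
    by (rule unif01_product.product_nn_integral_fold[OF split(2)])
       (use assms(1,2) in \<open>auto simp: S_def
         intro!: measurable_compose[OF measurable_edge_weight measurable_ennreal]\<close>)
  also have "\<dots> = (\<integral>\<^sup>+p. h (p i) (p j) \<partial>PiM {i, j} (\<lambda>_. unif01))"
  proof (rule nn_integral_cong_AE)
    have "AE p in PiM {i, j} (\<lambda>_. unif01). 0 < p k \<and> p k \<le> 1" if "k \<in> {i, j}" for k
      using that unif01.prob_space_axioms
      by (intro AE_PiM_component[where P = "\<lambda>x. 0 < x \<and> x \<le> 1"] AE_unif01)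
    then have "AE p in PiM {i, j} (\<lambda>_. unif01). (0 < p i \<and> p i \<le> 1) \<and> (0 < p j \<and> p j \<le> 1)"
      by simp
    then show "AE p in PiM {i, j} (\<lambda>_. unif01).
        (\<integral>\<^sup>+y. ennreal (edge_weight \<alpha> i j (merge {i, j} S (p, y))) \<partial>PiM S (\<lambda>_. unif01)) = h (p i) (p j)"
      by eventually_elim (use assms(1,2) in \<open>simp add: S_def h_def nn_integral_edge_weight_fiber\<close>)
  qed
  also have "\<dots> = (\<integral>\<^sup>+z. h (fst z) (snd z) \<partial>(unif01 \<Otimes>\<^sub>M unif01))"
    using assms(1) by (intro unif01_product.product_nn_integral_pair) auto
  also have "\<dots> = (\<integral>\<^sup>+a. \<integral>\<^sup>+b. h a b \<partial>unif01 \<partial>unif01)"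
    using unif01.nn_integral_fst[of "case_prod h" unif01] by (simp add: case_prod_beta')
  also have "\<dots> = (\<integral>\<^sup>+u. ennreal (u powr \<alpha> * (1 - u) ^ (i - 1)) * ennreal (1 - u) * indicator {0<..<1} u
      \<partial>lborel)"
    unfolding h_def by (rule nn_integral_unif01_diff) measurable
  also have "\<dots> = ennreal (Beta (\<alpha> + 1) (real (i - 1) + 2))"
    by (rule nn_integral_powr_mult_power_Beta[OF assms(3)])
  finally show ?thesis
    using assms(1) by (simp add: add.commute)
qed

lemma nn_integral_dlf_weight:
  assumes "\<alpha> > 0"
  shows "(\<integral>\<^sup>+x. ennreal (dlf_weight \<alpha> m x) \<partial>PiM {..<m} (\<lambda>_. unif01))
    = ennreal (\<Sum>i<m. real i * Beta (\<alpha> + 1) (real i + 1))"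
proof -
  have [measurable]: "(\<lambda>x. ennreal (edge_weight \<alpha> i j x)) \<in> borel_measurable (PiM {..<m} (\<lambda>_. unif01))"
    if "j < i" "i < m" for i j
    using that by (intro measurable_compose[OF measurable_edge_weight measurable_ennreal]) auto
  have "0 \<le> Beta (\<alpha> + 1) (real i + 1)" for i
    using assms by (simp add: Beta_def)
  have "(\<integral>\<^sup>+x. ennreal (dlf_weight \<alpha> m x) \<partial>PiM {..<m} (\<lambda>_. unif01))
      = (\<integral>\<^sup>+x. (\<Sum>i<m. \<Sum>j<i. ennreal (edge_weight \<alpha> i j x)) \<partial>PiM {..<m} (\<lambda>_. unif01))"
    unfolding dlf_weight_eq_sum_edge_weight
    by (intro nn_integral_cong) (simp add: edge_weight_def sum_nonneg)
  also have "\<dots> = (\<Sum>i<m. \<Sum>j<i. \<integral>\<^sup>+x. ennreal (edge_weight \<alpha> i j x) \<partial>PiM {..<m} (\<lambda>_. unif01))"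
    by (subst nn_integral_sum) (auto intro!: borel_measurable_sum sum.cong nn_integral_sum)
  also have "\<dots> = (\<Sum>i<m. \<Sum>j<i. ennreal (Beta (\<alpha> + 1) (real i + 1)))"
    using assms by (intro sum.cong refl) (simp add: nn_integral_edge_weight)
  also have "\<dots> = (\<Sum>i<m. ennreal (real i * Beta (\<alpha> + 1) (real i + 1)))"
    using \<open>\<And>i. 0 \<le> Beta (\<alpha> + 1) (real i + 1)\<close> by (simp add: ennreal_of_nat_eq_real_of_nat ennreal_mult)
  also have "\<dots> = ennreal (\<Sum>i<m. real i * Beta (\<alpha> + 1) (real i + 1))"
    using \<open>\<And>i. 0 \<le> Beta (\<alpha> + 1) (real i + 1)\<close> by simp
  finally show ?thesis .
qed

lemma ED_eq_sum_mult_Beta: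
  assumes "\<alpha> > 0"
  shows "ED \<alpha> m = (\<Sum>i<m. real i * Beta (\<alpha> + 1) (real i + 1))"
proof -
  have "dlf_weight \<alpha> m \<in> borel_measurable (PiM {..<m} (\<lambda>_. unif01))"
    unfolding dlf_weight_eq_sum_edge_weight[abs_def]
    by (intro borel_measurable_sum measurable_edge_weight) auto
  then have "ED \<alpha> m = enn2real (\<integral>\<^sup>+x. ennreal (dlf_weight \<alpha> m x) \<partial>PiM {..<m} (\<lambda>_. unif01))"
    unfolding ED_def unif_cube_def unif01_def[symmetric]
    by (intro integral_eq_nn_integral) (auto simp: dlf_weight_eq_sum_edge_weight edge_weight_def sum_nonneg)
  moreover have "0 \<le> Beta (\<alpha> + 1) (real i + 1)" for i
    using assms by (simp add: Beta_def)
  ultimately show ?thesis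
    by (simp add: nn_integral_dlf_weight[OF assms] sum_nonneg)
qed

lemma fact_mult_powr_div_Gamma_tendsto_1:
  fixes \<alpha> :: real
  assumes "\<alpha> \<notin> \<int>\<^sub>\<le>\<^sub>0"
  shows "(\<lambda>n. fact n * real n powr \<alpha> / Gamma (\<alpha> + real n + 1)) \<longlonglongrightarrow> 1"
proof -
  have "Gamma \<alpha> \<noteq> 0"
    using assms by (simp add: Gamma_eq_zero_iff)
  have "(\<lambda>n. Gamma_series \<alpha> n / Gamma \<alpha>) \<longlonglongrightarrow> Gamma \<alpha> / Gamma \<alpha>"
    by (intro tendsto_intros \<open>Gamma \<alpha> \<noteq> 0\<close>)
  moreover have "\<forall>\<^sub>F n in sequentially.
      Gamma_series \<alpha> n / Gamma \<alpha> = fact n * real n powr \<alpha> / Gamma (\<alpha> + real n + 1)"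
    using eventually_gt_at_top[of 0]
    by eventually_elim (use \<open>Gamma \<alpha> \<noteq> 0\<close> pochhammer_Gamma[OF assms] in
        \<open>simp add: Gamma_series_def powr_def add_ac\<close>)
  ultimately show ?thesis
    using \<open>Gamma \<alpha> \<noteq> 0\<close> tendsto_cong by fastforce
qed

lemma mult_Beta_telescope:
  fixes \<alpha> :: real
  assumes "\<alpha> > 0"
  defines "F \<equiv> \<lambda>n. Gamma (\<alpha> + 1) * fact n * (\<alpha> * real n + 1) / Gamma (\<alpha> + real n + 1)"
  shows "\<alpha> * (1 - \<alpha>) * (real n * Beta (\<alpha> + 1) (real n + 1)) = F (Suc n) - F n"
proof -
  define D where "D = Gamma (\<alpha> + real (Suc n) + 1)"
  have "D > 0"
    using \<open>\<alpha> > 0\<close> by (simp add: D_def)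
  have "\<alpha> + real n + 1 \<notin> \<int>\<^sub>\<le>\<^sub>0"
    using \<open>\<alpha> > 0\<close> by auto
  then have "D = (\<alpha> + real n + 1) * Gamma (\<alpha> + real n + 1)"
    using Gamma_plus1[of "\<alpha> + real n + 1"] by (simp add: D_def algebra_simps)
  then have F_n: "F n = Gamma (\<alpha> + 1) * fact n * (\<alpha> * real n + 1) * (\<alpha> + real n + 1) / D"
    using \<open>\<alpha> > 0\<close> by (simp add: F_def)
  have "Gamma (real n + 1) = fact n"
    using Gamma_fact[of n] by (simp add: add.commute)
  then have Beta_eq: "Beta (\<alpha> + 1) (real n + 1) = Gamma (\<alpha> + 1) * fact n / D"
    by (simp add: Beta_def D_def add_ac)
  have F_Suc: "F (Suc n) = Gamma (\<alpha> + 1) * (fact n * (real n + 1)) * (\<alpha> * (real n + 1) + 1) / D"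
    by (simp add: F_def D_def add.commute)
  show ?thesis
    unfolding Beta_eq F_Suc F_n using \<open>D > 0\<close> by (simp add: field_simps)
qed

lemma sum_mult_Beta_closed_form:
  fixes \<alpha> :: real
  assumes "\<alpha> > 0"
  shows "\<alpha> * (1 - \<alpha>) * (\<Sum>i<m. real i * Beta (\<alpha> + 1) (real i + 1))
    = Gamma (\<alpha> + 1) * fact m * (\<alpha> * real m + 1) / Gamma (\<alpha> + real m + 1) - 1"
proof -
  define F where "F n = Gamma (\<alpha> + 1) * fact n * (\<alpha> * real n + 1) / Gamma (\<alpha> + real n + 1)" for n
  have "\<alpha> * (1 - \<alpha>) * (\<Sum>i<m. real i * Beta (\<alpha> + 1) (real i + 1)) = (\<Sum>i<m. F (Suc i) - F i)"
    unfolding sum_distrib_left F_def using mult_Beta_telescope[OF assms] by simp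
  also have "\<dots> = F m - 1"
    unfolding sum_lessThan_telescope using assms by (auto simp: F_def Gamma_eq_zero_iff)
  finally show ?thesis
    unfolding F_def .
qed

lemma closed_form_div_powr_tendsto:
  fixes \<alpha> :: real
  assumes "\<alpha> > 0"
  shows "(\<lambda>m. Gamma (\<alpha> + 1) * fact m * (\<alpha> * real m + 1) / Gamma (\<alpha> + real m + 1)
      / real m powr (1 - \<alpha>)) \<longlonglongrightarrow> Gamma (\<alpha> + 1) * 1 * \<alpha>"
proof -
  have "\<alpha> \<notin> \<int>\<^sub>\<le>\<^sub>0"
    using assms by auto
  have "(\<lambda>m. Gamma (\<alpha> + 1) * (fact m * real m powr \<alpha> / Gamma (\<alpha> + real m + 1))
      * ((\<alpha> * real m + 1) / real m)) \<longlonglongrightarrow> Gamma (\<alpha> + 1) * 1 * \<alpha>"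
    by (intro tendsto_intros fact_mult_powr_div_Gamma_tendsto_1 \<open>\<alpha> \<notin> \<int>\<^sub>\<le>\<^sub>0\<close>)
       (use assms in real_asymp)
  moreover have "\<forall>\<^sub>F m in sequentially.
      Gamma (\<alpha> + 1) * (fact m * real m powr \<alpha> / Gamma (\<alpha> + real m + 1)) * ((\<alpha> * real m + 1) / real m)
      = Gamma (\<alpha> + 1) * fact m * (\<alpha> * real m + 1) / Gamma (\<alpha> + real m + 1) / real m powr (1 - \<alpha>)"
    using eventually_gt_at_top[of 0] by eventually_elim (simp add: powr_diff field_simps)
  ultimately show ?thesis
    by (rule Lim_transform_eventually)
qed

lemma sum_mult_Beta_eq:
  fixes \<alpha> :: real
  assumes "\<alpha> > 0" "\<alpha> \<noteq> 1"
  shows "(\<Sum>i<m. real i * Beta (\<alpha> + 1) (real i + 1))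
    = (Gamma (\<alpha> + 1) * fact m * (\<alpha> * real m + 1) / Gamma (\<alpha> + real m + 1) - 1) / (\<alpha> * (1 - \<alpha>))"
  using sum_mult_Beta_closed_form[OF assms(1), of m] assms by (simp add: field_simps)

lemma sum_mult_Beta_asymp_equiv:
  fixes \<alpha> :: real
  assumes "0 < \<alpha>" "\<alpha> < 1"
  shows "(\<lambda>m. \<Sum>i<m. real i * Beta (\<alpha> + 1) (real i + 1))
    \<sim>[at_top] (\<lambda>m. Gamma (\<alpha> + 1) / (1 - \<alpha>) * real m powr (1 - \<alpha>))"
proof (rule asymp_equivI')
  define F where "F m = Gamma (\<alpha> + 1) * fact m * (\<alpha> * real m + 1) / Gamma (\<alpha> + real m + 1)" for m
  have "Gamma (\<alpha> + 1) > 0"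
    using assms by simp
  then have "Gamma (\<alpha> + 1) \<noteq> 0"
    by linarith
  have "(\<lambda>m. (F m / real m powr (1 - \<alpha>) - 1 / real m powr (1 - \<alpha>)) / (\<alpha> * Gamma (\<alpha> + 1)))
      \<longlonglongrightarrow> (Gamma (\<alpha> + 1) * 1 * \<alpha> - 0) / (\<alpha> * Gamma (\<alpha> + 1))"
    unfolding F_def
    by (intro tendsto_intros closed_form_div_powr_tendsto)
       (use assms \<open>Gamma (\<alpha> + 1) \<noteq> 0\<close> in \<open>simp_all, real_asymp\<close>)
  also have "(Gamma (\<alpha> + 1) * 1 * \<alpha> - 0) / (\<alpha> * Gamma (\<alpha> + 1)) = 1"
    using assms \<open>Gamma (\<alpha> + 1) \<noteq> 0\<close> by simp
  finally have "(\<lambda>m. (F m / real m powr (1 - \<alpha>) - 1 / real m powr (1 - \<alpha>)) / (\<alpha> * Gamma (\<alpha> + 1)))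
      \<longlonglongrightarrow> 1" .
  moreover have "\<forall>\<^sub>F m in sequentially.
      (F m / real m powr (1 - \<alpha>) - 1 / real m powr (1 - \<alpha>)) / (\<alpha> * Gamma (\<alpha> + 1))
      = (\<Sum>i<m. real i * Beta (\<alpha> + 1) (real i + 1)) / (Gamma (\<alpha> + 1) / (1 - \<alpha>) * real m powr (1 - \<alpha>))"
    using eventually_gt_at_top[of 0]
  proof eventually_elim
    case (elim m)
    then have "real m powr (1 - \<alpha>) > 0"
      by simp
    then show ?case
      unfolding sum_mult_Beta_eq[OF \<open>\<alpha> > 0\<close> less_imp_neq[OF \<open>\<alpha> < 1\<close>]] F_def[symmetric]
      using assms \<open>Gamma (\<alpha> + 1) \<noteq> 0\<close> by (simp add: field_simps)
  qed
  ultimately show "((\<lambda>m. (\<Sum>i<m. real i * Beta (\<alpha> + 1) (real i + 1))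
      / (Gamma (\<alpha> + 1) / (1 - \<alpha>) * real m powr (1 - \<alpha>))) \<longlongrightarrow> 1) at_top"
    by (rule Lim_transform_eventually)
qed

lemma sum_mult_Beta_tendsto:
  fixes \<alpha> :: real
  assumes "\<alpha> > 1"
  shows "(\<lambda>m. \<Sum>i<m. real i * Beta (\<alpha> + 1) (real i + 1)) \<longlonglongrightarrow> 1 / (\<alpha> * (\<alpha> - 1))"
proof -
  define F where "F m = Gamma (\<alpha> + 1) * fact m * (\<alpha> * real m + 1) / Gamma (\<alpha> + real m + 1)" for m
  have "(\<lambda>m. (F m / real m powr (1 - \<alpha>) * real m powr (1 - \<alpha>) - 1) / (\<alpha> * (1 - \<alpha>)))
      \<longlonglongrightarrow> (Gamma (\<alpha> + 1) * 1 * \<alpha> * 0 - 1) / (\<alpha> * (1 - \<alpha>))"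
    unfolding F_def
    by (intro tendsto_intros closed_form_div_powr_tendsto) (use assms in \<open>simp_all, real_asymp\<close>)
  also have "(Gamma (\<alpha> + 1) * 1 * \<alpha> * 0 - 1) / (\<alpha> * (1 - \<alpha>)) = 1 / (\<alpha> * (\<alpha> - 1))"
    by (simp add: divide_simps)
  finally have "(\<lambda>m. (F m / real m powr (1 - \<alpha>) * real m powr (1 - \<alpha>) - 1) / (\<alpha> * (1 - \<alpha>)))
      \<longlonglongrightarrow> 1 / (\<alpha> * (\<alpha> - 1))" .
  moreover have "\<forall>\<^sub>F m in sequentially.
      (F m / real m powr (1 - \<alpha>) * real m powr (1 - \<alpha>) - 1) / (\<alpha> * (1 - \<alpha>))
      = (\<Sum>i<m. real i * Beta (\<alpha> + 1) (real i + 1))"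
    using eventually_gt_at_top[of 0]
    by eventually_elim (use assms in \<open>simp add: sum_mult_Beta_eq F_def\<close>)
  ultimately show ?thesis
    by (rule Lim_transform_eventually)
qed

lemma mult_Beta_2_eq: "real n * Beta 2 (real n + 1) = 2 / (real n + 2) - 1 / (real n + 1)"
proof -
  have "Gamma (real n + 1) = fact n"
    using Gamma_fact[of n] by (simp add: add.commute)
  moreover have "Gamma (real n + 3) = (real n + 2) * (real n + 1) * Gamma (real n + 1)"
    using Gamma_plus1[of "real n + 2"] Gamma_plus1[of "real n + 1"]
    by (simp add: add_ac nonpos_Ints_def)
  moreover have "Gamma (2 :: real) = 1"
    using Gamma_fact[of 1] by simp
  ultimately have "Beta 2 (real n + 1) = 1 / ((real n + 2) * (real n + 1))"
    by (simp add: Beta_def add_ac)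
  then show ?thesis
    by (simp add: field_simps)
qed

lemma sum_mult_Beta_2_eq:
  "(\<Sum>i<m. real i * Beta 2 (real i + 1)) = harm m + 2 / (real m + 1) - 2"
proof -
  define G where "G n = harm n + 2 / (real n + 1)" for n
  have "real n * Beta 2 (real n + 1) = G (Suc n) - G n" for n
    unfolding mult_Beta_2_eq G_def by (simp add: harm_Suc inverse_eq_divide add_ac)
  then have "(\<Sum>i<m. real i * Beta 2 (real i + 1)) = G m - G 0"
    by (simp add: sum_lessThan_telescope)
  then show ?thesis
    by (simp add: G_def harm_expand)
qed

lemma sum_mult_Beta_2_minus_ln_tendsto:
  "(\<lambda>m. (\<Sum>i<m. real i * Beta 2 (real i + 1)) - ln (real m)) \<longlonglongrightarrow> euler_mascheroni - 2"
proof -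
  have "(\<lambda>m. (harm m - ln (real m)) + 2 / (real m + 1) - 2) \<longlonglongrightarrow> euler_mascheroni + 0 - 2"
    by (intro tendsto_intros euler_mascheroni_LIMSEQ) real_asymp
  then show ?thesis
    unfolding sum_mult_Beta_2_eq by (simp add: algebra_simps)
qed

theorem proposition2:
  shows "(\<forall>\<alpha>::real. 0 < \<alpha> \<and> \<alpha> < 1 \<longrightarrow>
            (\<lambda>m. ED \<alpha> m) \<sim>[at_top] (\<lambda>m. Gamma (\<alpha> + 1) / (1 - \<alpha>) * real m powr (1 - \<alpha>)))
       \<and> ((\<lambda>m. ED 1 m - ln (real m)) \<longlonglongrightarrow> euler_mascheroni - 2)
       \<and> (\<forall>\<alpha>::real. \<alpha> > 1 \<longrightarrow> (\<lambda>m. ED \<alpha> m) \<longlonglongrightarrow> 1 / (\<alpha> * (\<alpha> - 1)))"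
proof (intro conjI allI impI)
  fix \<alpha> :: real
  assume "0 < \<alpha> \<and> \<alpha> < 1"
  then show "(\<lambda>m. ED \<alpha> m) \<sim>[at_top] (\<lambda>m. Gamma (\<alpha> + 1) / (1 - \<alpha>) * real m powr (1 - \<alpha>))"
    using sum_mult_Beta_asymp_equiv[of \<alpha>] by (simp add: ED_eq_sum_mult_Beta)
next
  show "(\<lambda>m. ED 1 m - ln (real m)) \<longlonglongrightarrow> euler_mascheroni - 2"
    using sum_mult_Beta_2_minus_ln_tendsto by (simp add: ED_eq_sum_mult_Beta)
next
  fix \<alpha> :: real
  assume "\<alpha> > 1"
  then show "(\<lambda>m. ED \<alpha> m) \<longlonglongrightarrow> 1 / (\<alpha> * (\<alpha> - 1))"
    using sum_mult_Beta_tendsto[of \<alpha>] by (simp add: ED_eq_sum_mult_Beta)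
qed

end
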